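(* Let $R$ be the ring of $2$-adic integers, $G=A_4$, $H=\langle a_1,a_2\rangle$ with $a_1=(1,2)(3,4)$, $a_2=(1,4)(2,3)$. Let $\delta_1,\delta_2,\delta_3$ be the linear characters of $H$ given by $\delta_1(a_1)=-1,\delta_1(a_2)=1$; $\delta_2(a_1)=1,\delta_2(a_2)=-1$; $\delta_3(a_1)=\delta_3(a_2)=-1$, viewed as rank-one $RH$-modules. Then each induced $R$-representation $\delta_i^G$ ($i=1,2,3$) of $G$ is irreducible and equivalent to the representation $\Gamma_2$ afforded by $M_2$. Moreover $\Gamma_2$ is equivalent to the monomial representation $a_1\mapsto\operatorname{diag}(-1,1,-1)$, $b\mapsto\left(\begin{smallmatrix}0&0&1\\1&0&0\\0&1&0\end{smallmatrix}\right)$ where $b=(1,2,3)$.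
   Context: Let $L$ be the free $R$-module with basis $e_1,\dots,e_4$ on which $G$ acts by permuting indices; $L_2=\{\sum\alpha_je_j:\alpha_j\in R,\ \sum\alpha_j\equiv0\pmod 2\}$, $L_0=R(e_1+e_2+e_3+e_4)$, $M_2=L_2/L_0$, an $RG$-module free of rank $3$ over $R$; $\Gamma_2$ is the $R$-representation it affords. Two $R$-representations are equivalent if their modules are isomorphic. *)

theory Defs
  imports "HOL-Analysis.Analysis"
begin

section \<open>The ring R of 2-adic integers, as the inverse limit of the rings Z/2^n Z\<close>

definition compat2 :: "(nat \<Rightarrow> int) \<Rightarrow> bool" where
  "compat2 x \<longleftrightarrow> (\<forall>n. x (Suc n) mod 2 ^ n = x n mod 2 ^ n)"

definition padic_rel :: "(nat \<Rightarrow> int) \<Rightarrow> (nat \<Rightarrow> int) \<Rightarrow> bool" where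
  "padic_rel x y \<longleftrightarrow> compat2 x \<and> compat2 y \<and> (\<forall>n. x n mod 2 ^ n = y n mod 2 ^ n)"

quotient_type padic2 = "nat \<Rightarrow> int" / partial: padic_rel
  unfolding part_equivp_def
proof (intro conjI allI)
  show "\<exists>x. padic_rel x x"
    by (rule exI[of _ "\<lambda>_. 0"]) (simp add: padic_rel_def compat2_def)
  fix x y
  show "padic_rel x y = (padic_rel x x \<and> padic_rel y y \<and> padic_rel x = padic_rel y)"
    unfolding padic_rel_def by (auto simp: fun_eq_iff)
qed

lemma compat2_add: "compat2 x \<Longrightarrow> compat2 y \<Longrightarrow> compat2 (\<lambda>n. x n + y n)"
  by (auto simp: compat2_def intro: mod_add_cong)
lemma compat2_mult: "compat2 x \<Longrightarrow> compat2 y \<Longrightarrow> compat2 (\<lambda>n. x n * y n)"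
  by (auto simp: compat2_def intro: mod_mult_cong)
lemma compat2_minus: "compat2 x \<Longrightarrow> compat2 (\<lambda>n. - x n)"
  by (auto simp: compat2_def intro: mod_minus_cong)
lemma compat2_diff: "compat2 x \<Longrightarrow> compat2 y \<Longrightarrow> compat2 (\<lambda>n. x n - y n)"
  by (auto simp: compat2_def intro: mod_diff_cong)
lemma compat2_const: "compat2 (\<lambda>n. c)"
  by (simp add: compat2_def)

instantiation padic2 :: comm_ring_1
begin

lift_definition zero_padic2 :: padic2 is "\<lambda>n. 0"
  by (simp add: padic_rel_def compat2_const)
lift_definition one_padic2 :: padic2 is "\<lambda>n. 1"
  by (simp add: padic_rel_def compat2_const)
lift_definition plus_padic2 :: "padic2 \<Rightarrow> padic2 \<Rightarrow> padic2" is "\<lambda>x y n. x n + y n"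
  by (auto simp: padic_rel_def compat2_add intro: mod_add_cong)
lift_definition times_padic2 :: "padic2 \<Rightarrow> padic2 \<Rightarrow> padic2" is "\<lambda>x y n. x n * y n"
  by (auto simp: padic_rel_def compat2_mult intro: mod_mult_cong)
lift_definition uminus_padic2 :: "padic2 \<Rightarrow> padic2" is "\<lambda>x n. - x n"
  by (auto simp: padic_rel_def compat2_minus intro: mod_minus_cong)
lift_definition minus_padic2 :: "padic2 \<Rightarrow> padic2 \<Rightarrow> padic2" is "\<lambda>x y n. x n - y n"
  by (auto simp: padic_rel_def compat2_diff intro: mod_diff_cong)

instance
proof
  fix a b c :: padic2
  show "a + b + c = a + (b + c)" by transfer (simp add: padic_rel_def compat2_add add.assoc)
  show "a + b = b + a" by transfer (simp add: padic_rel_def compat2_add add.commute)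
  show "0 + a = a" by transfer (simp add: padic_rel_def)
  show "- a + a = 0" by transfer (simp add: padic_rel_def compat2_add compat2_minus compat2_const)
  show "a - b = a + - b" by transfer (simp add: padic_rel_def compat2_add compat2_minus compat2_diff)
  show "a * b * c = a * (b * c)" by transfer (simp add: padic_rel_def compat2_mult mult.assoc)
  show "a * b = b * a" by transfer (simp add: padic_rel_def compat2_mult mult.commute)
  show "1 * a = a" by transfer (simp add: padic_rel_def)
  show "(a + b) * c = a * c + b * c" by transfer (simp add: padic_rel_def compat2_mult compat2_add algebra_simps)
  show "(0::padic2) \<noteq> 1" by transfer (auto simp: padic_rel_def compat2_const intro!: exI[of _ 1])
qed

end

datatype pt = P1 | P2 | P3 | P4

lemma UNIV_pt: "(UNIV :: pt set) = {P1, P2, P3, P4}"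
  using pt.exhaust by auto

instance pt :: finite
  by standard (simp add: UNIV_pt)

text \<open>Permutations are functions pt => pt; the product g h is composition g \<circ> h
  (apply h first).\<close>

definition A4 :: "(pt \<Rightarrow> pt) set" where
  "A4 = {p. p permutes (UNIV :: pt set) \<and> evenperm p}"

fun a1 :: "pt \<Rightarrow> pt" where
  "a1 P1 = P2" | "a1 P2 = P1" | "a1 P3 = P4" | "a1 P4 = P3"

fun a2 :: "pt \<Rightarrow> pt" where
  "a2 P1 = P4" | "a2 P4 = P1" | "a2 P2 = P3" | "a2 P3 = P2"

fun b :: "pt \<Rightarrow> pt" where
  "b P1 = P2" | "b P2 = P3" | "b P3 = P1" | "b P4 = P4"

definition H :: "(pt \<Rightarrow> pt) set" where
  "H = {id, a1, a2, a1 \<circ> a2}"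

definition is_rep :: "((pt \<Rightarrow> pt) \<Rightarrow> padic2 ^ 'n ^ 'n) \<Rightarrow> bool" where
  "is_rep \<rho> \<longleftrightarrow> \<rho> id = mat 1 \<and> (\<forall>g\<in>A4. \<forall>h\<in>A4. \<rho> (g \<circ> h) = \<rho> g ** \<rho> h)"

text \<open>Irreducible R-representation: R^n has no RG-submodule N that is R-pure
  (R^n/N torsion-free) other than 0 and R^n.\<close>
definition irreducible_rep :: "((pt \<Rightarrow> pt) \<Rightarrow> padic2 ^ 'n ^ 'n) \<Rightarrow> bool" where
  "irreducible_rep \<rho> \<longleftrightarrow>
     \<not> (\<exists>N :: (padic2 ^ 'n) set.
          0 \<in> N \<and> (\<forall>u\<in>N. \<forall>v\<in>N. u + v \<in> N) \<and> (\<forall>c. \<forall>u\<in>N. c *s u \<in> N) \<and>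
          (\<forall>g\<in>A4. \<forall>u\<in>N. \<rho> g *v u \<in> N) \<and>
          (\<forall>c u. c \<noteq> 0 \<longrightarrow> c *s u \<in> N \<longrightarrow> u \<in> N) \<and>
          N \<noteq> {0} \<and> N \<noteq> UNIV)"

definition lin_char :: "padic2 \<Rightarrow> padic2 \<Rightarrow> (pt \<Rightarrow> pt) \<Rightarrow> padic2" where
  "lin_char s1 s2 h =
     (if h = id then 1 else if h = a1 then s1 else if h = a2 then s2 else s1 * s2)"

definition delta1 :: "(pt \<Rightarrow> pt) \<Rightarrow> padic2" where "delta1 = lin_char (-1) 1"
definition delta2 :: "(pt \<Rightarrow> pt) \<Rightarrow> padic2" where "delta2 = lin_char 1 (-1)"
definition delta3 :: "(pt \<Rightarrow> pt) \<Rightarrow> padic2" where "delta3 = lin_char (-1) (-1)"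

definition transv :: "3 \<Rightarrow> (pt \<Rightarrow> pt)" where
  "transv i = (if i = 1 then id else if i = 2 then b else b \<circ> b)"

definition induced :: "((pt \<Rightarrow> pt) \<Rightarrow> padic2) \<Rightarrow> (pt \<Rightarrow> pt) \<Rightarrow> padic2 ^ 3 ^ 3" where
  "induced \<delta> g = (\<chi> i j. let h = inv (transv i) \<circ> g \<circ> transv j in if h \<in> H then \<delta> h else 0)"

text \<open>L = R^4 with basis e_P1..e_P4; g e_j = e_(g j), i.e. (g x)_k = x_(g^-1 k).\<close>
definition perm_act :: "(pt \<Rightarrow> pt) \<Rightarrow> padic2 ^ pt \<Rightarrow> padic2 ^ pt" where
  "perm_act g x = (\<chi> k. x $ inv g k)"

definition L2 :: "(padic2 ^ pt) set" where
  "L2 = {x. \<exists>c. (\<Sum>j\<in>UNIV. x $ j) = 2 * c}"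

definition L0 :: "(padic2 ^ pt) set" where
  "L0 = {c *s (\<chi> j. 1) | c. True}"

text \<open>sigma is equivalent to Gamma_2, i.e. the RG-module R^3 (via sigma) is isomorphic
  to M_2 = L_2/L_0: phi : R^3 -> L_2 is R-linear and induces an RG-isomorphism
  R^3 -> L_2/L_0.\<close>
definition equiv_Gamma2 :: "((pt \<Rightarrow> pt) \<Rightarrow> padic2 ^ 3 ^ 3) \<Rightarrow> bool" where
  "equiv_Gamma2 \<sigma> \<longleftrightarrow>
     (\<exists>\<phi> :: padic2 ^ 3 \<Rightarrow> padic2 ^ pt.
        (\<forall>u v. \<phi> (u + v) = \<phi> u + \<phi> v) \<and> (\<forall>c u. \<phi> (c *s u) = c *s \<phi> u) \<and>
        (\<forall>u. \<phi> u \<in> L2) \<and>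
        (\<forall>x\<in>L2. \<exists>u. x - \<phi> u \<in> L0) \<and>
        (\<forall>u. \<phi> u \<in> L0 \<longrightarrow> u = 0) \<and>
        (\<forall>g\<in>A4. \<forall>u. perm_act g (\<phi> u) - \<phi> (\<sigma> g *v u) \<in> L0))"

definition diagA :: "padic2 ^ 3 ^ 3" where
  "diagA = vector [vector [-1, 0, 0], vector [0, 1, 0], vector [0, 0, -1]]"

definition permB :: "padic2 ^ 3 ^ 3" where
  "permB = vector [vector [0, 0, 1], vector [1, 0, 0], vector [0, 1, 0]]"

end

theory Submission
  imports Defs
begin

text \<open>
  Proof plan.  Everything is reduced to the character \<open>\<delta>\<^sub>3\<close>.

  \<^item> \<open>A\<^sub>4\<close> is listed explicitly (twelve words in \<open>a\<^sub>1, a\<^sub>2, b\<close>), so identities between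
    matrices indexed by \<open>A\<^sub>4\<close> reduce to finitely many computations.
  \<^item> General facts about matrix representations of \<open>A\<^sub>4\<close> over \<open>R\<close>: a family of matrices
    intertwined modulo \<open>L\<^sub>0\<close> with \<open>M\<^sub>2\<close> by an \<open>R\<close>-linear injection is automatically a
    representation; representations agreeing on the generators \<open>a\<^sub>1, b\<close> coincide;
    representation, irreducibility and equivalence to \<open>\<Gamma>\<^sub>2\<close> are invariant under
    conjugation by an invertible matrix; and a criterion for irreducibility in degree 3
    (cyclic action of \<open>b\<close> on the axes plus a "reflection" onto each axis), which uses that
    \<open>R\<close> has no \<open>2\<close>-torsion.
  \<^item> For \<open>\<delta>\<^sub>3\<close> the Frobenius-reciprocity map \<open>u \<mapsto> \<Sum> u\<^sub>i t\<^sub>i (e\<^sub>1 + e\<^sub>3)\<close> is an isomorphism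
    \<open>\<delta>\<^sub>3\<^sup>G \<cong> M\<^sub>2\<close>; \<open>\<delta>\<^sub>3\<^sup>G\<close> is irreducible, and it is the monomial representation itself,
    so every representation with the given matrices for \<open>a\<^sub>1, b\<close> coincides with \<open>\<delta>\<^sub>3\<^sup>G\<close>.
  \<^item> \<open>\<delta>\<^sub>1\<^sup>G\<close> and \<open>\<delta>\<^sub>2\<^sup>G\<close> are conjugate to \<open>\<delta>\<^sub>3\<^sup>G\<close> by powers of the cyclic matrix \<open>permB\<close>
    (the three characters are conjugate under \<open>b\<close>), so all claims transfer.
\<close>

lemma fun_pt_eq: "(f::pt \<Rightarrow> 'a) = g \<longleftrightarrow> f P1 = g P1 \<and> f P2 = g P2 \<and> f P3 = g P3 \<and> f P4 = g P4"
proof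
  assume "f P1 = g P1 \<and> f P2 = g P2 \<and> f P3 = g P3 \<and> f P4 = g P4"
  then show "f = g" by (intro ext, case_tac x) auto
qed simp

lemma all_pt: "(\<forall>k::pt. P k) \<longleftrightarrow> P P1 \<and> P P2 \<and> P P3 \<and> P P4"
  by (metis pt.exhaust)

lemma sum_pt: "sum f (UNIV::pt set) = f P1 + f P2 + f P3 + f P4"
  by (simp add: UNIV_pt add.assoc)

definition pt_map :: "pt \<Rightarrow> pt \<Rightarrow> pt \<Rightarrow> pt \<Rightarrow> pt \<Rightarrow> pt" where
  "pt_map w x y z p = (case p of P1 \<Rightarrow> w | P2 \<Rightarrow> x | P3 \<Rightarrow> y | P4 \<Rightarrow> z)"

lemma pt_map_simps [simp]:
  "pt_map w x y z P1 = w" "pt_map w x y z P2 = x" "pt_map w x y z P3 = y" "pt_map w x y z P4 = z"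
  by (simp_all add: pt_map_def)

lemma pt_map_table: "(f::pt \<Rightarrow> pt) = pt_map (f P1) (f P2) (f P3) (f P4)"
  by (simp add: fun_pt_eq)

lemma A4_comp: "g \<in> A4 \<Longrightarrow> h \<in> A4 \<Longrightarrow> g \<circ> h \<in> A4"
  unfolding A4_def
  by (auto intro: permutes_compose simp: evenperm_comp permutes_imp_permutation)

lemma A4_id: "id \<in> A4"
  unfolding A4_def by simp

lemma A4_bij: "g \<in> A4 \<Longrightarrow> bij g"
  unfolding A4_def by (auto intro: permutes_bij)

lemma A4_double_transposition:
  "x \<noteq> y \<Longrightarrow> z \<noteq> w \<Longrightarrow> Transposition.transpose x y \<circ> Transposition.transpose z w \<in> A4"
  unfolding A4_def
  by (auto intro!: permutes_compose permutes_swap_id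
           simp: evenperm_comp permutation_swap_id evenperm_swap)

lemma a1_A4: "a1 \<in> A4"
proof -
  have "a1 = Transposition.transpose P1 P2 \<circ> Transposition.transpose P3 P4"
    by (simp add: fun_pt_eq transpose_def)
  then show ?thesis by (metis A4_double_transposition pt.distinct)
qed

lemma b_A4: "b \<in> A4"
proof -
  have "b = Transposition.transpose P1 P2 \<circ> Transposition.transpose P2 P3"
    by (simp add: fun_pt_eq transpose_def)
  then show ?thesis by (metis A4_double_transposition pt.distinct)
qed

text \<open>\<open>a\<^sub>2\<close> is conjugate to \<open>a\<^sub>1\<close> by \<open>b\<close>; hence \<open>a\<^sub>1, b\<close> generate \<open>A\<^sub>4\<close>.\<close>
lemma a2_conj: "a2 = b \<circ> (a1 \<circ> (b \<circ> b))"
  by (simp add: fun_pt_eq)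

lemma b_cube: "b \<circ> (b \<circ> b) = id"
  by (simp add: fun_pt_eq)

lemma a2_A4: "a2 \<in> A4"
  unfolding a2_conj by (intro A4_comp a1_A4 b_A4)

text \<open>The elements of \<open>A\<^sub>4 = H \<union> bH \<union> b\<^sup>2H\<close>, written as words in the generators.\<close>
definition A4_elems :: "(pt \<Rightarrow> pt) set" where
  "A4_elems = {id, a1, a2, a1 \<circ> a2, b, b \<circ> b, b \<circ> a1, b \<circ> a2, b \<circ> (a1 \<circ> a2),
        (b \<circ> b) \<circ> a1, (b \<circ> b) \<circ> a2, (b \<circ> b) \<circ> (a1 \<circ> a2)}"

lemma A4_elems_sub: "A4_elems \<subseteq> A4"
  unfolding A4_elems_def using A4_id a1_A4 a2_A4 b_A4 by (auto intro!: A4_comp)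

lemma perm_or_swap_in_A4_elems:
  assumes "inj (p::pt \<Rightarrow> pt)"
  shows "p \<in> A4_elems \<or> Transposition.transpose P1 P2 \<circ> p \<in> A4_elems"
proof -
  have distinct: "p P1 \<noteq> p P2" "p P1 \<noteq> p P3" "p P1 \<noteq> p P4" "p P2 \<noteq> p P3"
      "p P2 \<noteq> p P4" "p P3 \<noteq> p P4"
    using assms by (auto dest: injD)
  have table: "p = pt_map (p P1) (p P2) (p P3) (p P4)" by (rule pt_map_table)
  show ?thesis
    using distinct
    apply (subst (1 2) table)
    apply (cases "p P1"; cases "p P2"; cases "p P3"; cases "p P4")
    apply (simp_all add: A4_elems_def fun_pt_eq transpose_def)
    done
qed

lemma A4_eq_elems: "A4 = A4_elems"
proof
  show "A4 \<subseteq> A4_elems"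
  proof
    fix p assume "p \<in> A4"
    then have perm: "p permutes UNIV" and ev: "evenperm p" by (auto simp: A4_def)
    show "p \<in> A4_elems"
    proof (rule ccontr)
      assume "p \<notin> A4_elems"
      moreover have "inj p" using perm by (rule permutes_inj)
      ultimately have "Transposition.transpose P1 P2 \<circ> p \<in> A4_elems"
        using perm_or_swap_in_A4_elems by blast
      then have "Transposition.transpose P1 P2 \<circ> p \<in> A4" using A4_elems_sub by blast
      then have "evenperm (Transposition.transpose P1 P2 \<circ> p)" by (simp add: A4_def)
      then show False
        using ev perm by (simp add: evenperm_comp permutation_swap_id evenperm_swap
                                    permutes_imp_permutation)
    qed
  qed
qed (rule A4_elems_sub)

section \<open>The ring \<open>R\<close> has no \<open>2\<close>-torsion\<close>

lemma compat2_two_torsion: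
  assumes c: "compat2 x" and h: "\<forall>n. (x n + x n) mod 2 ^ n = 0 mod (2::int) ^ n"
  shows "x n mod 2 ^ n = 0"
proof -
  have "(x (Suc n) + x (Suc n)) mod 2 ^ Suc n = 0" using spec[OF h, of "Suc n"] by simp
  then have "(2::int) ^ Suc n dvd x (Suc n) + x (Suc n)" by (simp only: dvd_eq_mod_eq_0)
  then obtain k where k: "x (Suc n) + x (Suc n) = 2 ^ Suc n * k" by (elim dvdE)
  have "2 * x (Suc n) = 2 * (2 ^ n * k)" using k by (metis power_Suc mult.assoc mult_2)
  then have "x (Suc n) mod 2 ^ n = 0" by simp
  then show ?thesis using c by (simp add: compat2_def)
qed

lemma padic2_two_torsion_free: fixes c :: padic2 assumes "c + c = 0" shows "c = 0"
  using assms
  apply transfer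
  subgoal for x
    using compat2_two_torsion[of x] by (simp add: padic_rel_def compat2_const)
  done

lemma inv_pt:
  assumes "bij (g::pt \<Rightarrow> pt)"
  shows "inv g k = (if g P1 = k then P1 else if g P2 = k then P2 else if g P3 = k then P3 else P4)"
proof -
  obtain j where j: "g j = k" using assms unfolding bij_def surj_def by metis
  have "inj g" using assms by (rule bij_is_inj)
  moreover have "inv g k = j" using \<open>inj g\<close> j by (metis inv_f_f)
  ultimately show ?thesis using j by (cases j) (auto dest: injD)
qed

lemma perm_act_table:
  "bij g \<Longrightarrow> perm_act g x =
     (\<chi> k. x $ (if g P1 = k then P1 else if g P2 = k then P2 else if g P3 = k then P3 else P4))"
  unfolding perm_act_def using inv_pt by simp

lemma perm_act_comp: "bij g \<Longrightarrow> bij h \<Longrightarrow> perm_act (g \<circ> h) x = perm_act g (perm_act h x)"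
  unfolding perm_act_def by (simp add: o_inv_distrib)

lemma perm_act_diff: "perm_act g (x - y) = perm_act g x - perm_act g y"
  unfolding perm_act_def by (simp add: vec_eq_iff)

lemma L0_iff: "x \<in> L0 \<longleftrightarrow> (\<forall>k. x $ k = x $ P1)"
proof
  assume "\<forall>k. x $ k = x $ P1"
  then have "x = (x $ P1) *s (\<chi> j. 1)" by (simp add: vec_eq_iff)
  then show "x \<in> L0" unfolding L0_def by blast
qed (auto simp: L0_def)

lemma L0_perm_act: "x \<in> L0 \<Longrightarrow> perm_act g x \<in> L0"
  unfolding L0_iff perm_act_def by (metis vec_lambda_beta)

lemma L0_add: "x \<in> L0 \<Longrightarrow> y \<in> L0 \<Longrightarrow> x + y \<in> L0"
  unfolding L0_iff by (metis vector_add_component)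

lemma L0_diff: "x \<in> L0 \<Longrightarrow> y \<in> L0 \<Longrightarrow> x - y \<in> L0"
  unfolding L0_iff by (metis vector_minus_component)

text \<open>If \<open>\<rho>\<close> is intertwined modulo \<open>L\<^sub>0\<close> with the permutation action by an additive map
  that is injective modulo \<open>L\<^sub>0\<close>, then \<open>\<rho>\<close> is multiplicative, because the permutation
  action is.\<close>
lemma rep_from_intertwiner:
  fixes \<rho> :: "(pt \<Rightarrow> pt) \<Rightarrow> padic2 ^ 'n ^ 'n" and \<phi> :: "padic2 ^ 'n \<Rightarrow> padic2 ^ pt"
  assumes id: "\<rho> id = mat 1"
    and add: "\<And>u v. \<phi> (u + v) = \<phi> u + \<phi> v"
    and inj: "\<And>u. \<phi> u \<in> L0 \<Longrightarrow> u = 0"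
    and intertw: "\<And>g u. g \<in> A4 \<Longrightarrow> perm_act g (\<phi> u) - \<phi> (\<rho> g *v u) \<in> L0"
  shows "is_rep \<rho>"
  unfolding is_rep_def
proof (intro conjI id ballI)
  fix g h assume g: "g \<in> A4" and h: "h \<in> A4"
  have diff: "\<phi> (u - v) = \<phi> u - \<phi> v" for u v
    using add[of "u - v" v] by (simp add: algebra_simps)
  show "\<rho> (g \<circ> h) = \<rho> g ** \<rho> h"
    unfolding matrix_eq
  proof
    fix u
    have gh: "perm_act (g \<circ> h) (\<phi> u) - \<phi> (\<rho> (g \<circ> h) *v u) \<in> L0"
      using intertw A4_comp[OF g h] by blast
    have h_then_g: "perm_act g (perm_act h (\<phi> u)) - perm_act g (\<phi> (\<rho> h *v u)) \<in> L0"
      using L0_perm_act[OF intertw[OF h, of u], of g] by (simp add: perm_act_diff)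
    have g_after: "perm_act g (\<phi> (\<rho> h *v u)) - \<phi> (\<rho> g *v (\<rho> h *v u)) \<in> L0"
      using intertw[OF g] by blast
    have "perm_act (g \<circ> h) (\<phi> u) = perm_act g (perm_act h (\<phi> u))"
      using A4_bij[OF g] A4_bij[OF h] by (rule perm_act_comp)
    then have "\<phi> (\<rho> (g \<circ> h) *v u) - \<phi> (\<rho> g *v (\<rho> h *v u)) \<in> L0"
      using L0_diff[OF L0_add[OF h_then_g g_after] gh] by (simp add: algebra_simps)
    then have "\<phi> (\<rho> (g \<circ> h) *v u - \<rho> g *v (\<rho> h *v u)) \<in> L0" by (simp add: diff)
    then have "\<rho> (g \<circ> h) *v u - \<rho> g *v (\<rho> h *v u) = 0" by (rule inj)
    then show "\<rho> (g \<circ> h) *v u = (\<rho> g ** \<rho> h) *v u"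
      by (simp add: matrix_vector_mul_assoc)
  qed
qed

lemma reps_agree_on_A4:
  fixes \<sigma> \<tau> :: "(pt \<Rightarrow> pt) \<Rightarrow> padic2 ^ 'n ^ 'n"
  assumes "is_rep \<sigma>" "is_rep \<tau>" "\<sigma> a1 = \<tau> a1" "\<sigma> b = \<tau> b" "g \<in> A4"
  shows "\<sigma> g = \<tau> g"
proof -
  let ?agree = "\<lambda>x. x \<in> A4 \<and> \<sigma> x = \<tau> x"
  have comp: "?agree (x \<circ> y)" if "?agree x" "?agree y" for x y
    using assms(1,2) that A4_comp unfolding is_rep_def by simp
  have gen: "?agree id" "?agree a1" "?agree b"
    using assms(1-4) A4_id a1_A4 b_A4 unfolding is_rep_def by simp_all
  have bb: "?agree (b \<circ> b)" by (rule comp[OF gen(3) gen(3)])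
  have a2: "?agree a2" unfolding a2_conj by (intro comp gen bb)
  have a1a2: "?agree (a1 \<circ> a2)" by (rule comp[OF gen(2) a2])
  have "?agree x" if "x \<in> A4_elems" for x
    using that gen bb a2 a1a2 comp[OF gen(3) gen(2)] comp[OF gen(3) a2] comp[OF gen(3) a1a2]
      comp[OF bb gen(2)] comp[OF bb a2] comp[OF bb a1a2]
    unfolding A4_elems_def by blast
  then show ?thesis using assms(5) A4_eq_elems by blast
qed

definition pure_submodule :: "((pt \<Rightarrow> pt) \<Rightarrow> padic2 ^ 'n ^ 'n) \<Rightarrow> (padic2 ^ 'n) set \<Rightarrow> bool" where
  "pure_submodule \<rho> N \<longleftrightarrow>
     0 \<in> N \<and> (\<forall>u\<in>N. \<forall>v\<in>N. u + v \<in> N) \<and> (\<forall>c. \<forall>u\<in>N. c *s u \<in> N) \<and>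
     (\<forall>g\<in>A4. \<forall>u\<in>N. \<rho> g *v u \<in> N) \<and> (\<forall>c u. c \<noteq> 0 \<longrightarrow> c *s u \<in> N \<longrightarrow> u \<in> N)"

lemma irreducible_repI:
  assumes "\<And>N. pure_submodule \<rho> N \<Longrightarrow> N \<noteq> {0} \<Longrightarrow> N = UNIV"
  shows "irreducible_rep \<rho>"
  unfolding irreducible_rep_def
proof (rule notI, elim exE conjE)
  fix N assume "0 \<in> N" "\<forall>u\<in>N. \<forall>v\<in>N. u + v \<in> N" "\<forall>c. \<forall>u\<in>N. c *s u \<in> N"
    "\<forall>g\<in>A4. \<forall>u\<in>N. \<rho> g *v u \<in> N" "\<forall>c u. c \<noteq> 0 \<longrightarrow> c *s u \<in> N \<longrightarrow> u \<in> N"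
    and nonzero: "N \<noteq> {0}" and proper: "N \<noteq> UNIV"
  have "pure_submodule \<rho> N" unfolding pure_submodule_def by (intro conjI; fact)
  then have "N = UNIV" using nonzero by (rule assms)
  with proper show False by contradiction
qed

lemma irreducible_repD:
  assumes "irreducible_rep \<rho>" "pure_submodule \<rho> N" "N \<noteq> {0}"
  shows "N = UNIV"
proof (rule ccontr)
  have no_proper: "\<not> (\<exists>N. pure_submodule \<rho> N \<and> N \<noteq> {0} \<and> N \<noteq> UNIV)"
    using assms(1) unfolding irreducible_rep_def pure_submodule_def conj_assoc .
  assume "N \<noteq> UNIV"
  with assms(2,3) have "pure_submodule \<rho> N \<and> N \<noteq> {0} \<and> N \<noteq> UNIV" by (intro conjI)
  then have "\<exists>N. pure_submodule \<rho> N \<and> N \<noteq> {0} \<and> N \<noteq> UNIV" by (rule exI)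
  with no_proper show False by contradiction
qed

lemma pure_submoduleI:
  assumes "0 \<in> N" "\<And>u v. u \<in> N \<Longrightarrow> v \<in> N \<Longrightarrow> u + v \<in> N" "\<And>c u. u \<in> N \<Longrightarrow> c *s u \<in> N"
    "\<And>g u. g \<in> A4 \<Longrightarrow> u \<in> N \<Longrightarrow> \<rho> g *v u \<in> N"
    "\<And>c u. c \<noteq> 0 \<Longrightarrow> c *s u \<in> N \<Longrightarrow> u \<in> N"
  shows "pure_submodule \<rho> N"
  unfolding pure_submodule_def by (intro conjI ballI allI impI; rule assms; assumption)

lemma pure_submoduleD:
  assumes "pure_submodule \<rho> N"
  shows "0 \<in> N" "u \<in> N \<Longrightarrow> v \<in> N \<Longrightarrow> u + v \<in> N" "u \<in> N \<Longrightarrow> c *s u \<in> N"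
    "g \<in> A4 \<Longrightarrow> u \<in> N \<Longrightarrow> \<rho> g *v u \<in> N" "c \<noteq> 0 \<Longrightarrow> c *s u \<in> N \<Longrightarrow> u \<in> N"
  using assms unfolding pure_submodule_def by metis+

definition conjugate_reps ::
    "padic2 ^ 'n ^ 'n \<Rightarrow> padic2 ^ 'n ^ 'n \<Rightarrow> ((pt \<Rightarrow> pt) \<Rightarrow> padic2 ^ 'n ^ 'n) \<Rightarrow>
     ((pt \<Rightarrow> pt) \<Rightarrow> padic2 ^ 'n ^ 'n) \<Rightarrow> bool" where
  "conjugate_reps P Q \<sigma> \<tau> \<longleftrightarrow>
     P ** Q = mat 1 \<and> Q ** P = mat 1 \<and> (\<forall>g\<in>A4. \<sigma> g = P ** \<tau> g ** Q)"

lemma matrix_vector_mult_smult: "A *v (c *s x) = c *s (A *v (x :: 'a::comm_semiring_1 ^ 'n))"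
  by (simp add: matrix_vector_mult_def vec_eq_iff sum_distrib_left mult.left_commute)

lemma conjugate_reps_vec:
  assumes "conjugate_reps P Q \<sigma> \<tau>"
  shows "P *v (Q *v u) = u" "Q *v (P *v u) = u"
    and "g \<in> A4 \<Longrightarrow> Q *v (\<sigma> g *v u) = \<tau> g *v (Q *v u)"
  using assms by (simp_all add: conjugate_reps_def matrix_vector_mul_assoc matrix_mul_assoc)

lemma conjugate_is_rep:
  assumes conj: "conjugate_reps P Q \<sigma> \<tau>" and rep: "is_rep \<tau>"
  shows "is_rep \<sigma>"
proof -
  have PQ: "P ** Q = mat 1" and QP: "Q ** P = mat 1"
    and \<sigma>: "\<And>g. g \<in> A4 \<Longrightarrow> \<sigma> g = P ** \<tau> g ** Q"
    using conj by (simp_all add: conjugate_reps_def)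
  have "\<sigma> id = mat 1" using \<sigma>[OF A4_id] rep PQ by (simp add: is_rep_def)
  moreover have "\<sigma> (g \<circ> h) = \<sigma> g ** \<sigma> h" if "g \<in> A4" "h \<in> A4" for g h
  proof -
    have "\<sigma> g ** \<sigma> h = P ** \<tau> g ** (Q ** P) ** \<tau> h ** Q"
      using that by (simp add: \<sigma> matrix_mul_assoc)
    also have "\<dots> = P ** \<tau> (g \<circ> h) ** Q"
      using rep that by (simp add: QP is_rep_def matrix_mul_assoc)
    finally show ?thesis using \<sigma>[OF A4_comp[OF that]] by simp
  qed
  ultimately show ?thesis by (simp add: is_rep_def)
qed

lemma conjugate_pure_submodule:
  assumes conj: "conjugate_reps P Q \<sigma> \<tau>" and N: "pure_submodule \<sigma> N"
  shows "pure_submodule \<tau> ((*v) Q ` N)"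
proof (rule pure_submoduleI)
  note vec = conjugate_reps_vec[OF conj]
  note sub = pure_submoduleD[OF N]
  show "0 \<in> (*v) Q ` N"
    using sub(1) by (rule image_eqI[rotated]) simp
  show "x + y \<in> (*v) Q ` N" if xy: "x \<in> (*v) Q ` N" "y \<in> (*v) Q ` N" for x y
  proof -
    obtain u v where "u \<in> N" "v \<in> N" "x = Q *v u" "y = Q *v v" using xy by blast
    then show ?thesis
      by (intro image_eqI[where x = "u + v"] sub(2)) (simp_all add: matrix_vector_right_distrib)
  qed
  show "c *s x \<in> (*v) Q ` N" if x: "x \<in> (*v) Q ` N" for c x
  proof -
    obtain u where "u \<in> N" "x = Q *v u" using x by blast
    then show ?thesis
      by (intro image_eqI[where x = "c *s u"] sub(3)) (simp_all add: matrix_vector_mult_smult)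
  qed
  show "\<tau> g *v x \<in> (*v) Q ` N" if g: "g \<in> A4" and x: "x \<in> (*v) Q ` N" for g x
  proof -
    obtain u where "u \<in> N" "x = Q *v u" using x by blast
    then show ?thesis
      using g by (intro image_eqI[where x = "\<sigma> g *v u"] sub(4)) (simp_all add: vec(3))
  qed
  show "x \<in> (*v) Q ` N" if c: "c \<noteq> 0" and cx: "c *s x \<in> (*v) Q ` N" for c x
  proof -
    obtain u where u: "u \<in> N" "c *s x = Q *v u" using cx by blast
    have "c *s (P *v x) = u" using u(2) vec(1) by (metis matrix_vector_mult_smult)
    then have "P *v x \<in> N" using sub(5)[OF c] u(1) by simp
    then show ?thesis by (rule image_eqI[rotated]) (simp add: vec(2))
  qed
qed

lemma conjugate_irreducible:
  assumes conj: "conjugate_reps P Q \<sigma> \<tau>" and irr: "irreducible_rep \<tau>"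
  shows "irreducible_rep \<sigma>"
proof (rule irreducible_repI)
  fix N assume N: "pure_submodule \<sigma> N" and nonzero: "N \<noteq> {0}"
  note vec = conjugate_reps_vec[OF conj]
  obtain u where u: "u \<in> N" "u \<noteq> 0" using nonzero pure_submoduleD(1)[OF N] by blast
  have "Q *v u \<noteq> 0" using u(2) vec(1) by (metis matrix_vector_mult_0_right)
  then have "(*v) Q ` N \<noteq> {0}" using u(1) by blast
  then have "(*v) Q ` N = UNIV"
    using irreducible_repD[OF irr conjugate_pure_submodule[OF conj N]] by simp
  then have "P *v v \<in> (*v) Q ` N" for v by simp
  then show "N = UNIV" using vec by (metis UNIV_eq_I imageE)
qed

lemma conjugate_equiv_Gamma2:
  assumes conj: "conjugate_reps P Q \<sigma> \<tau>" and equiv: "equiv_Gamma2 \<tau>"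
  shows "equiv_Gamma2 \<sigma>"
proof -
  note vec = conjugate_reps_vec[OF conj]
  obtain \<phi> :: "padic2 ^ 3 \<Rightarrow> padic2 ^ pt"
    where add: "\<forall>u v. \<phi> (u + v) = \<phi> u + \<phi> v" and smult: "\<forall>c u. \<phi> (c *s u) = c *s \<phi> u"
    and L2: "\<forall>u. \<phi> u \<in> L2" and onto: "\<forall>x\<in>L2. \<exists>u. x - \<phi> u \<in> L0"
    and inj: "\<forall>u. \<phi> u \<in> L0 \<longrightarrow> u = 0"
    and intertw: "\<forall>g\<in>A4. \<forall>u. perm_act g (\<phi> u) - \<phi> (\<tau> g *v u) \<in> L0"
    using equiv unfolding equiv_Gamma2_def by (elim exE conjE) (rule that; assumption)
  show ?thesis
    unfolding equiv_Gamma2_def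
  proof (intro exI[of _ "\<lambda>u. \<phi> (Q *v u)"] conjI allI ballI impI)
    show "\<phi> (Q *v (u + v)) = \<phi> (Q *v u) + \<phi> (Q *v v)" for u v
      by (simp add: add matrix_vector_right_distrib)
    show "\<phi> (Q *v (c *s u)) = c *s \<phi> (Q *v u)" for c u
      by (simp add: smult matrix_vector_mult_smult)
    show "\<phi> (Q *v u) \<in> L2" for u using L2 by blast
    show "\<exists>u. x - \<phi> (Q *v u) \<in> L0" if x: "x \<in> L2" for x
    proof -
      obtain u where "x - \<phi> u \<in> L0" using onto x by blast
      then show ?thesis using vec(2) by metis
    qed
    show "u = 0" if "\<phi> (Q *v u) \<in> L0" for u
      using inj that vec(1) by (metis matrix_vector_mult_0_right)
    show "perm_act g (\<phi> (Q *v u)) - \<phi> (Q *v (\<sigma> g *v u)) \<in> L0" if g: "g \<in> A4" for g u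
      using intertw g by (simp add: vec(3))
  qed
qed


text \<open>Irreducibility criterion in degree 3: if \<open>b\<close> permutes the coordinate axes cyclically and
  for every axis some group element acts as the reflection \<open>v \<mapsto> 2 v\<^sub>k e\<^sub>k - v\<close>, then a nonzero
  pure submodule contains a multiple \<open>2 v\<^sub>k e\<^sub>k\<close>, hence (purity, no \<open>2\<close>-torsion) the axis \<open>e\<^sub>k\<close>,
  hence all axes.\<close>
lemma permB_axis:
  "permB *v axis 1 1 = axis 2 1" "permB *v axis 2 1 = axis 3 1" "permB *v axis 3 1 = axis 1 1"
  by (simp_all add: permB_def vec_eq_iff forall_3 matrix_vector_mult_def sum_3 axis_def)

lemma vec3_axis_expansion: "(v::padic2^3) = v$1 *s axis 1 1 + v$2 *s axis 2 1 + v$3 *s axis 3 1"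
  by (simp add: vec_eq_iff forall_3 axis_def)

lemma irreducible_criterion3:
  fixes \<rho> :: "(pt \<Rightarrow> pt) \<Rightarrow> padic2 ^ 3 ^ 3"
  assumes reflection: "\<And>k. \<exists>h\<in>A4. \<forall>v. \<rho> h *v v + v = (v$k + v$k) *s axis k 1"
    and \<rho>_b: "\<rho> b = permB"
  shows "irreducible_rep \<rho>"
proof (rule irreducible_repI)
  fix N assume N: "pure_submodule \<rho> N" and nonzero: "N \<noteq> {0}"
  note sub = pure_submoduleD[OF N]
  obtain u where u: "u \<in> N" "u \<noteq> 0" using nonzero sub(1) by blast
  then obtain k where uk: "u $ k \<noteq> 0" by (auto simp: vec_eq_iff)
  obtain h where h: "h \<in> A4" "\<And>v. \<rho> h *v v + v = (v$k + v$k) *s axis k 1"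
    using reflection by blast
  have "(u$k + u$k) *s axis k 1 \<in> N"
    using h(2)[of u] sub(2)[OF sub(4)[OF h(1) u(1)] u(1)] by simp
  moreover have "u$k + u$k \<noteq> 0" using uk padic2_two_torsion_free by blast
  ultimately have axis_k: "axis k 1 \<in> N" by (rule sub(5)[rotated])
  have step: "axis i 1 \<in> N \<Longrightarrow> permB *v axis i 1 \<in> N" for i
    using sub(4)[OF b_A4, of "axis i 1"] \<rho>_b by simp
  have "k = 1 \<or> k = 2 \<or> k = 3" by (rule exhaust_3)
  then have axes: "axis 1 1 \<in> N" "axis 2 1 \<in> N" "axis 3 1 \<in> N"
    using axis_k step[of 1] step[of 2] step[of 3] unfolding permB_axis by blast+
  have "v \<in> N" for v
    by (subst vec3_axis_expansion) (intro sub(2) sub(3) axes)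
  then show "N = UNIV" by blast
qed

lemma inv_b: "inv b = b \<circ> b"
  by (rule inv_unique_comp) (simp_all add: fun_pt_eq)

lemma inv_bb: "inv (b \<circ> b) = b"
  by (rule inv_unique_comp) (simp_all add: fun_pt_eq)

lemma transv_simps: "transv 1 = id" "transv 2 = b" "transv 3 = b \<circ> b"
  by (simp_all add: transv_def)

lemmas induced_eval_simps = induced_def matrix_vector_mult_def sum_3 transv_simps inv_b inv_bb
  H_def fun_pt_eq lin_char_def

lemma induced_id: "induced (lin_char s t) id = mat 1"
  by (simp add: induced_eval_simps vec_eq_iff forall_3 mat_def b_cube o_assoc[symmetric])

lemma induced_b: "induced (lin_char s t) b = permB"
  by (simp add: induced_eval_simps vec_eq_iff forall_3 permB_def b_cube o_assoc[symmetric])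

lemma induced_delta3_a1: "induced delta3 a1 = diagA"
  by (simp add: induced_eval_simps vec_eq_iff forall_3 diagA_def delta3_def)


text \<open>The Frobenius-reciprocity map \<open>u \<mapsto> u\<^sub>1 w + u\<^sub>2 bw + u\<^sub>3 b\<^sup>2w\<close> with \<open>w = e\<^sub>1 + e\<^sub>3\<close>; modulo \<open>L\<^sub>0\<close>
  the subgroup \<open>H\<close> acts on \<open>w\<close> through \<open>\<delta>\<^sub>3\<close> (e.g.\ \<open>a\<^sub>1 w = e\<^sub>2 + e\<^sub>4 \<equiv> -w\<close>).\<close>
definition reciprocity_map :: "padic2 ^ 3 \<Rightarrow> padic2 ^ pt" where
  "reciprocity_map u =
     (\<chi> k. case k of P1 \<Rightarrow> u$1 + u$2 | P2 \<Rightarrow> u$2 + u$3 | P3 \<Rightarrow> u$1 + u$3 | P4 \<Rightarrow> 0)"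

lemma reciprocity_map_add: "reciprocity_map (u + v) = reciprocity_map u + reciprocity_map v"
  by (simp add: reciprocity_map_def vec_eq_iff all_pt)

lemma reciprocity_map_smult: "reciprocity_map (c *s u) = c *s reciprocity_map u"
  by (simp add: reciprocity_map_def vec_eq_iff all_pt algebra_simps)

lemma reciprocity_map_L2: "reciprocity_map u \<in> L2"
  unfolding L2_def mem_Collect_eq
  by (rule exI[of _ "u$1 + u$2 + u$3"]) (simp add: reciprocity_map_def sum_pt algebra_simps)

text \<open>Surjectivity modulo \<open>L\<^sub>0\<close>: solve \<open>u\<^sub>1 + u\<^sub>2 = x\<^sub>1 - x\<^sub>4\<close>, \<open>u\<^sub>2 + u\<^sub>3 = x\<^sub>2 - x\<^sub>4\<close>,
  \<open>u\<^sub>1 + u\<^sub>3 = x\<^sub>3 - x\<^sub>4\<close>; this needs \<open>\<Sum> x\<^sub>i\<close> to be even.\<close>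
lemma reciprocity_map_onto: assumes "x \<in> L2" shows "\<exists>u. x - reciprocity_map u \<in> L0"
proof -
  obtain c where "x$P1 + x$P2 + x$P3 + x$P4 = 2 * c" using assms by (auto simp: L2_def sum_pt)
  then have x1: "x$P1 = c + c - x$P2 - x$P3 - x$P4" by (simp add: algebra_simps)
  define s where "s = c - 2 * x$P4"
  show ?thesis
    by (rule exI[of _ "vector [s - (x$P2 - x$P4), s - (x$P3 - x$P4), s - (x$P1 - x$P4)]"])
       (simp add: L0_iff all_pt reciprocity_map_def s_def x1 algebra_simps)
qed

text \<open>Injectivity modulo \<open>L\<^sub>0\<close>: a constant image forces \<open>u\<^sub>1 = u\<^sub>2 = u\<^sub>3\<close> and \<open>u\<^sub>1 + u\<^sub>1 = 0\<close>.\<close>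
lemma reciprocity_map_inj: assumes "reciprocity_map u \<in> L0" shows "u = 0"
proof -
  have const: "\<forall>k. reciprocity_map u $ k = reciprocity_map u $ P1" using assms L0_iff by blast
  have e1: "u$2 + u$3 = u$1 + u$2" using const[rule_format, of P2] by (simp add: reciprocity_map_def)
  have e2: "u$1 + u$3 = u$1 + u$2" using const[rule_format, of P3] by (simp add: reciprocity_map_def)
  have e3: "0 = u$1 + u$2" using const[rule_format, of P4] by (simp add: reciprocity_map_def)
  have u32: "u$3 = u$2" using e2 by simp
  have u21: "u$2 = u$1" using e1 unfolding u32 by (simp add: add.commute)
  have "u$1 + u$1 = 0" using e3 unfolding u21 by simp
  then have "u$1 = 0" by (rule padic2_two_torsion_free)
  then show ?thesis using u21 u32 by (simp add: vec_eq_iff forall_3)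
qed

lemma reciprocity_map_intertwines:
  assumes "g \<in> A4"
  shows "perm_act g (reciprocity_map u) - reciprocity_map (induced delta3 g *v u) \<in> L0"
proof -
  have "g \<in> A4_elems" using assms A4_eq_elems by blast
  then show ?thesis
    unfolding perm_act_table[OF A4_bij[OF assms]] A4_elems_def insert_iff empty_iff
    by (elim disjE)
       (simp_all add: induced_eval_simps L0_iff all_pt reciprocity_map_def delta3_def algebra_simps)
qed

lemma induced_delta3_equiv_Gamma2: "equiv_Gamma2 (induced delta3)"
  unfolding equiv_Gamma2_def
  by (intro exI[of _ reciprocity_map] conjI allI ballI impI reciprocity_map_add reciprocity_map_smult
      reciprocity_map_L2 reciprocity_map_onto reciprocity_map_inj reciprocity_map_intertwines)

lemma induced_delta3_is_rep: "is_rep (induced delta3)"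
  using reciprocity_map_add reciprocity_map_inj reciprocity_map_intertwines
  by (intro rep_from_intertwiner[where \<phi> = reciprocity_map]) (simp_all add: delta3_def induced_id)

lemma induced_delta3_reflections:
  "induced delta3 (a1 \<circ> a2) *v v + v = (v$1 + v$1) *s axis 1 1"
  "induced delta3 a1 *v v + v = (v$2 + v$2) *s axis 2 1"
  "induced delta3 a2 *v v + v = (v$3 + v$3) *s axis 3 1"
  by (simp_all add: induced_eval_simps vec_eq_iff forall_3 axis_def delta3_def)

lemma induced_delta3_irreducible: "irreducible_rep (induced delta3)"
proof (rule irreducible_criterion3)
  fix k :: 3
  have "k = 1 \<or> k = 2 \<or> k = 3" by (rule exhaust_3)
  then show "\<exists>h\<in>A4. \<forall>v. induced delta3 h *v v + v = (v$k + v$k) *s axis k 1"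
    using induced_delta3_reflections A4_comp[OF a1_A4 a2_A4] a1_A4 a2_A4 by blast
qed (simp add: delta3_def induced_b)


section \<open>The conjugate characters \<open>\<delta>\<^sub>1, \<delta>\<^sub>2\<close>\<close>

lemma permB_cube: "permB ** (permB ** permB) = mat 1" "(permB ** permB) ** permB = mat 1"
  by (simp_all add: permB_def vec_eq_iff forall_3 matrix_matrix_mult_def sum_3 mat_def)

lemma permB_conj:
  "permB ** M ** (permB ** permB) =
     vector [vector [M$3$3, M$3$1, M$3$2], vector [M$1$3, M$1$1, M$1$2], vector [M$2$3, M$2$1, M$2$2]]"
  by (simp add: vec_eq_iff forall_3 matrix_matrix_mult_def sum_3 permB_def)

lemma permB_conj_inv:
  "(permB ** permB) ** M ** permB =
     vector [vector [M$2$2, M$2$3, M$2$1], vector [M$3$2, M$3$3, M$3$1], vector [M$1$2, M$1$3, M$1$1]]"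
  by (simp add: vec_eq_iff forall_3 matrix_matrix_mult_def sum_3 permB_def)

text \<open>Since \<open>\<delta>\<^sub>1\<close> and \<open>\<delta>\<^sub>2\<close> arise from \<open>\<delta>\<^sub>3\<close> by conjugation with \<open>b\<^sup>\<plusminus>\<^sup>1\<close>, their induced
  representations are those of \<open>\<delta>\<^sub>3\<close> with the transversal shifted; checked element by element.\<close>
lemma induced_delta1_conjugate: "conjugate_reps permB (permB ** permB) (induced delta1) (induced delta3)"
  unfolding conjugate_reps_def
proof (intro conjI permB_cube ballI)
  fix g assume "g \<in> A4"
  then have "g \<in> A4_elems" using A4_eq_elems by blast
  then show "induced delta1 g = permB ** induced delta3 g ** (permB ** permB)"
    unfolding permB_conj A4_elems_def insert_iff empty_iff
    by (elim disjE) (simp_all add: induced_eval_simps vec_eq_iff forall_3 delta1_def delta3_def)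
qed

lemma induced_delta2_conjugate: "conjugate_reps (permB ** permB) permB (induced delta2) (induced delta3)"
  unfolding conjugate_reps_def
proof (intro conjI permB_cube ballI)
  fix g assume "g \<in> A4"
  then have "g \<in> A4_elems" using A4_eq_elems by blast
  then show "induced delta2 g = (permB ** permB) ** induced delta3 g ** permB"
    unfolding permB_conj_inv A4_elems_def insert_iff empty_iff
    by (elim disjE) (simp_all add: induced_eval_simps vec_eq_iff forall_3 delta2_def delta3_def)
qed

theorem mainTheorem6:
  shows "(\<forall>\<delta> \<in> {delta1, delta2, delta3}.
            is_rep (induced \<delta>) \<and> irreducible_rep (induced \<delta>) \<and> equiv_Gamma2 (induced \<delta>))
       \<and> (\<exists>\<sigma>. is_rep \<sigma> \<and> \<sigma> a1 = diagA \<and> \<sigma> b = permB)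
       \<and> (\<forall>\<sigma>. is_rep \<sigma> \<and> \<sigma> a1 = diagA \<and> \<sigma> b = permB \<longrightarrow> equiv_Gamma2 \<sigma>)"
proof (intro conjI allI impI)
  have delta3: "is_rep (induced delta3) \<and> irreducible_rep (induced delta3) \<and>
      equiv_Gamma2 (induced delta3)"
    using induced_delta3_is_rep induced_delta3_irreducible induced_delta3_equiv_Gamma2 by blast
  have "is_rep (induced \<delta>) \<and> irreducible_rep (induced \<delta>) \<and> equiv_Gamma2 (induced \<delta>)"
    if "conjugate_reps P Q (induced \<delta>) (induced delta3)" for P Q \<delta>
    using delta3 conjugate_is_rep[OF that] conjugate_irreducible[OF that]
      conjugate_equiv_Gamma2[OF that] by blast
  then show "\<forall>\<delta> \<in> {delta1, delta2, delta3}.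
      is_rep (induced \<delta>) \<and> irreducible_rep (induced \<delta>) \<and> equiv_Gamma2 (induced \<delta>)"
    using induced_delta1_conjugate induced_delta2_conjugate delta3 by blast
  have delta3_b: "induced delta3 b = permB" by (simp add: delta3_def induced_b)
  show "\<exists>\<sigma>. is_rep \<sigma> \<and> \<sigma> a1 = diagA \<and> \<sigma> b = permB"
    using induced_delta3_is_rep induced_delta3_a1 delta3_b by blast
  text \<open>A representation with these generator matrices equals \<open>\<delta>\<^sub>3\<^sup>G\<close> on \<open>A\<^sub>4\<close>.\<close>
  fix \<sigma> :: "(pt \<Rightarrow> pt) \<Rightarrow> padic2 ^ 3 ^ 3"
  assume \<sigma>: "is_rep \<sigma> \<and> \<sigma> a1 = diagA \<and> \<sigma> b = permB"
  have "conjugate_reps (mat 1) (mat 1) \<sigma> (induced delta3)"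
    unfolding conjugate_reps_def
    using reps_agree_on_A4[OF _ induced_delta3_is_rep] \<sigma> induced_delta3_a1 delta3_b by simp
  then show "equiv_Gamma2 \<sigma>" using induced_delta3_equiv_Gamma2 by (rule conjugate_equiv_Gamma2)
qed

end
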